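(* Let $\mathfrak{R}$ be either the finite field $\mathbb{F}_q$ ($q$ a prime power) or the ring $\mathbb{Z}_k$ ($k\ge 2$), and let $\chi$ be the character of $\mathfrak{R}$ described in the context. Let $C$ and $D$ be two $\mathfrak{R}$-linear codes of length $n$ and let $\bm{w}\in\mathfrak{R}^n$. Then \[ \mathfrak{Jac}(C,D^{\perp},\bm{w}; x_{a} : a \in \mathfrak{R}^{3}) =\frac{1}{|D|}\,\mathfrak{Jac}\Big(C,D,\bm{w};\ \sum_{b\in\mathfrak{R}}\chi(a_2 b)\,x_{(a_1,b,a_3)} : a=(a_1,a_2,a_3)\in\mathfrak{R}^{3}\Big), \] where the right-hand side means the polynomial $\mathfrak{Jac}(C,D,\bm{w};x_a : a\in\mathfrak{R}^3)$ with each variable $x_{(a_1,a_2,a_3)}$ replaced by $\sum_{b\in\mathfrak{R}}\chi(a_2 b)\,x_{(a_1,b,a_3)}$.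
   Context: An $\mathbb{F}_q$-linear code of length $n$ is a subspace of $\mathbb{F}_q^n$; a $\mathbb{Z}_k$-linear code of length $n$ is an additive subgroup of $\mathbb{Z}_k^n$. For $\bm{u},\bm{v}\in\mathfrak{R}^n$, $\bm{u}\cdot\bm{v}=\sum_i u_iv_i$, and the dual code is $C^\perp=\{\bm{v}\in\mathfrak{R}^n : \bm{u}\cdot\bm{v}=0 \text{ for all }\bm{u}\in C\}$. The character $\chi:\mathfrak{R}\to\mathbb{C}^\times$ is defined as follows. If $\mathfrak{R}=\mathbb{F}_q$ with $q=p^f$, $p$ prime, fix a root $\lambda$ of a primitive irreducible polynomial of degree $f$ over $\mathbb{F}_p$, write each $\alpha\in\mathbb{F}_q$ uniquely as $\alpha=\alpha_0+\alpha_1\lambda+\cdots+\alpha_{f-1}\lambda^{f-1}$ with $\alpha_i\in\mathbb{F}_p$, and set $\chi(\alpha)=\zeta_p^{\alpha_0}$ where $\zeta_p$ is a primitive $p$-th root of unity. If $\mathfrak{R}=\mathbb{Z}_k$, set $\chi(\alpha)=\zeta_k^{\alpha}$ with $\zeta_k$ a primitive $k$-th root of unity. For $\bm{u},\bm{v},\bm{w}\in\mathfrak{R}^n$ and $a\in\mathfrak{R}^3$, let $h_a(\bm{u},\bm{v};\bm{w})=\#\{i : (u_i,v_i,w_i)=a\}$. The complete joint Jacobi polynomial of $\mathfrak{R}$-linear codes $C,D$ of length $n$ with respect to $\bm{w}$ is the polynomial in the $|\mathfrak{R}|^3$ variables $x_a$ ($a\in\mathfrak{R}^3$) \[\mathfrak{Jac}(C,D,\bm{w};x_a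 : a\in\mathfrak{R}^3)=\sum_{\bm{u}\in C,\ \bm{v}\in D}\ \prod_{a\in\mathfrak{R}^3}x_a^{h_a(\bm{u},\bm{v};\bm{w})}.\] *)

theory Defs
  imports Complex_Main "HOL-Computational_Algebra.Primes"
begin

text \<open>The ring is an abstract finite commutative ring type 'r; the predicates below say
that 'r is (up to isomorphism) F_q resp. Z_k and that chi is the character described in
the paper.\<close>

definition primitive_element :: "'r::{comm_ring_1,finite} \<Rightarrow> bool" where
  "primitive_element lam \<longleftrightarrow> lam \<noteq> 0 \<and> (\<forall>x::'r. x \<noteq> 0 \<longrightarrow> (\<exists>i::nat. x = lam ^ i))"

text \<open>F_q with q = p^f: a field with p^f elements, of characteristic p; lam is a root of a
primitive irreducible polynomial of degree f over F_p, i.e. a generator of the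
multiplicative group; every alpha is uniquely sum_{i<f} alpha_i lam^i with alpha_i in F_p
(elements of_nat j, j < p), and chi(alpha) = zeta_p^(alpha_0).\<close>

definition Fq_character :: "('r::{comm_ring_1,finite} \<Rightarrow> complex) \<Rightarrow> bool" where
  "Fq_character chi \<longleftrightarrow>
     (\<exists>(p::nat) (f::nat) (lam::'r) (zeta::complex).
        prime p \<and> f \<ge> 1 \<and> card (UNIV::'r set) = p ^ f \<and>
        (\<forall>x::'r. x \<noteq> 0 \<longrightarrow> (\<exists>y. x * y = 1)) \<and>
        of_nat p = (0::'r) \<and>
        primitive_element lam \<and>
        zeta ^ p = 1 \<and> (\<forall>j. 0 < j \<and> j < p \<longrightarrow> zeta ^ j \<noteq> 1) \<and>
        (\<forall>a::nat \<Rightarrow> nat. (\<forall>i<f. a i < p) \<longrightarrow>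
            chi (\<Sum>i<f. of_nat (a i) * lam ^ i) = zeta ^ (a 0)))"

text \<open>Z_k, k >= 2: phi is a ring isomorphism onto {0..<k} with arithmetic mod k, and
chi(alpha) = zeta_k^alpha.\<close>

definition Zk_character :: "('r::{comm_ring_1,finite} \<Rightarrow> complex) \<Rightarrow> bool" where
  "Zk_character chi \<longleftrightarrow>
     (\<exists>(k::nat) (phi::'r \<Rightarrow> nat) (zeta::complex).
        k \<ge> 2 \<and> bij_betw phi UNIV {0..<k} \<and>
        (\<forall>x y. phi (x + y) = (phi x + phi y) mod k) \<and>
        (\<forall>x y. phi (x * y) = (phi x * phi y) mod k) \<and>
        zeta ^ k = 1 \<and> (\<forall>j. 0 < j \<and> j < k \<longrightarrow> zeta ^ j \<noteq> 1) \<and>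
        (\<forall>x. chi x = zeta ^ phi x))"

definition vecs :: "nat \<Rightarrow> 'r list set" where
  "vecs n = {v. length v = n}"

definition vadd :: "'r::plus list \<Rightarrow> 'r list \<Rightarrow> 'r list" where
  "vadd u v = map2 (+) u v"

definition linear_subspace :: "nat \<Rightarrow> 'r::comm_ring_1 list set \<Rightarrow> bool" where
  "linear_subspace n C \<longleftrightarrow> C \<subseteq> vecs n \<and> replicate n 0 \<in> C \<and>
     (\<forall>u\<in>C. \<forall>v\<in>C. vadd u v \<in> C) \<and> (\<forall>c. \<forall>u\<in>C. map ((*) c) u \<in> C)"

definition additive_subgroup :: "nat \<Rightarrow> 'r::comm_ring_1 list set \<Rightarrow> bool" where
  "additive_subgroup n C \<longleftrightarrow> C \<subseteq> vecs n \<and> replicate n 0 \<in> C \<and>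
     (\<forall>u\<in>C. \<forall>v\<in>C. vadd u v \<in> C) \<and> (\<forall>u\<in>C. map uminus u \<in> C)"

definition dotp :: "nat \<Rightarrow> 'r::comm_ring_1 list \<Rightarrow> 'r list \<Rightarrow> 'r" where
  "dotp n u v = (\<Sum>i<n. u ! i * v ! i)"

definition dual_code :: "nat \<Rightarrow> 'r::comm_ring_1 list set \<Rightarrow> 'r list set" where
  "dual_code n C = {v \<in> vecs n. \<forall>u\<in>C. dotp n u v = 0}"

section \<open>Complete joint Jacobi polynomial (evaluated at a point x of C^(R^3))\<close>

definition hcount :: "nat \<Rightarrow> 'r list \<Rightarrow> 'r list \<Rightarrow> 'r list \<Rightarrow> 'r \<times> 'r \<times> 'r \<Rightarrow> nat" where
  "hcount n u v w a = card {i. i < n \<and> (u ! i, v ! i, w ! i) = a}"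

definition jac :: "nat \<Rightarrow> 'r::finite list set \<Rightarrow> 'r list set \<Rightarrow> 'r list
                   \<Rightarrow> ('r \<times> 'r \<times> 'r \<Rightarrow> complex) \<Rightarrow> complex" where
  "jac n C D w x = (\<Sum>u\<in>C. \<Sum>v\<in>D. \<Prod>a\<in>UNIV. x a ^ hcount n u v w a)"

end

theory Submission
  imports Defs
begin

text \<open>Write each Jacobi polynomial as a sum over pairs of codewords of a product over the
coordinates. After the substitution, expanding the product of the character sums turns
the right-hand side into
  \<open>\<Sum>u\<in>C. \<Sum>t. (\<Sum>v\<in>D. \<chi>(v\<cdot>t)) \<Prod>i. x(u\<^sub>i, t\<^sub>i, w\<^sub>i)\<close>,
and by orthogonality of characters the inner sum is \<open>|D|\<close> for \<open>t \<in> D\<^sup>\<perp>\<close> and \<open>0\<close>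
otherwise. The two rings enter only through \<open>\<chi>\<close> being an additive character that
detects \<open>D\<^sup>\<perp>\<close>. Over \<open>F\<^sub>q\<close>, additivity needs every element to be an \<open>F\<^sub>p\<close>-combination
of \<open>1, \<lambda>, \<dots>, \<lambda>\<^sup>f\<^sup>-\<^sup>1\<close>: the span of the first \<open>m\<close> powers of \<open>\<lambda>\<close> either becomes closed
under multiplication by the primitive element \<open>\<lambda>\<close>, hence is everything, or grows by a
factor \<open>p\<close>, so it has all \<open>p\<^sup>f\<close> elements at \<open>m = f\<close>.\<close>

section \<open>Jacobi polynomials as sums of products over coordinates\<close>

lemma prod_pow_hcount:
  fixes y :: "'r::finite \<times> 'r \<times> 'r \<Rightarrow> complex"
  shows "(\<Prod>a\<in>UNIV. y a ^ hcount n u v w a) = (\<Prod>i<n. y (u!i, v!i, w!i))"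
proof -
  have "(\<Prod>i<n. y (u!i, v!i, w!i)) =
        (\<Prod>a\<in>UNIV. \<Prod>i\<in>{i. i \<in> {..<n} \<and> (u!i, v!i, w!i) = a}. y (u!i, v!i, w!i))"
    by (rule prod.group[symmetric]) auto
  also have "\<dots> = (\<Prod>a\<in>UNIV. y a ^ hcount n u v w a)"
    by (rule prod.cong) (auto simp: hcount_def)
  finally show ?thesis by simp
qed

lemma finite_vecs: "finite (vecs n :: 'r::finite list set)"
proof -
  have "vecs n = {xs :: 'r list. set xs \<subseteq> UNIV \<and> length xs = n}" by (auto simp: vecs_def)
  then show ?thesis using finite_lists_length_eq[of "UNIV :: 'r set" n] by simp
qed

lemma prod_sum_eq_sum_vecs:
  fixes F :: "nat \<Rightarrow> 'r::finite \<Rightarrow> 'a::comm_semiring_1"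
  shows "(\<Prod>i<n. \<Sum>b\<in>UNIV. F i b) = (\<Sum>t\<in>vecs n. \<Prod>i<n. F i (t!i))"
proof (induction n arbitrary: F)
  case 0
  have vecs_0: "vecs 0 = {[]}" by (auto simp: vecs_def)
  show ?case unfolding vecs_0 by simp
next
  case (Suc n)
  have vecs_Suc: "vecs (Suc n) = (\<lambda>(b,t). b # t) ` (UNIV \<times> vecs n)"
    by (auto simp: vecs_def image_iff length_Suc_conv)
  have inj: "inj_on (\<lambda>(b,t). b # t) (UNIV \<times> vecs n)" by (auto simp: inj_on_def)
  have "(\<Prod>i<Suc n. \<Sum>b\<in>UNIV. F i b) = (\<Sum>b\<in>UNIV. F 0 b) * (\<Prod>i<n. \<Sum>b\<in>UNIV. F (Suc i) b)"
    by (rule prod.lessThan_Suc_shift)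
  also have "\<dots> = (\<Sum>b\<in>UNIV. F 0 b) * (\<Sum>t\<in>vecs n. \<Prod>i<n. F (Suc i) (t!i))"
    using Suc.IH[of "\<lambda>i. F (Suc i)"] by simp
  also have "\<dots> = (\<Sum>(b,t)\<in>UNIV \<times> vecs n. F 0 b * (\<Prod>i<n. F (Suc i) (t!i)))"
    by (simp add: sum_product sum.cartesian_product)
  also have "\<dots> = (\<Sum>(b,t)\<in>UNIV \<times> vecs n. \<Prod>i<Suc n. F i ((b#t)!i))"
    by (simp only: prod.lessThan_Suc_shift nth_Cons_0 nth_Cons_Suc)
  also have "\<dots> = (\<Sum>t\<in>vecs (Suc n). \<Prod>i<Suc n. F i (t!i))"
    unfolding vecs_Suc by (subst sum.reindex[OF inj]) (simp add: case_prod_beta)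
  finally show ?case .
qed

section \<open>The identity for an additive character detecting the dual code\<close>

definition additive_char :: "('r::comm_ring_1 \<Rightarrow> complex) \<Rightarrow> bool" where
  "additive_char chi \<longleftrightarrow> chi 0 = 1 \<and> (\<forall>a b. chi (a + b) = chi a * chi b)"

definition detects_dual :: "('r::comm_ring_1 \<Rightarrow> complex) \<Rightarrow> nat \<Rightarrow> 'r list set \<Rightarrow> bool" where
  "detects_dual chi n D \<longleftrightarrow>
     (\<forall>t\<in>vecs n. t \<notin> dual_code n D \<longrightarrow> (\<exists>v\<in>D. chi (dotp n v t) \<noteq> 1))"

lemma additive_char_sum:
  assumes "additive_char chi" and "finite I"
  shows "chi (\<Sum>i\<in>I. g i) = (\<Prod>i\<in>I. chi (g i))"
  using assms(2) by (induction I rule: finite_induct) (use assms(1) in \<open>auto simp: additive_char_def\<close>)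

lemma dotp_vadd:
  assumes "length v = n" "length v' = n"
  shows "dotp n (vadd v v') t = dotp n v t + dotp n v' t"
  using assms unfolding dotp_def vadd_def by (simp add: sum.distrib[symmetric] algebra_simps)

lemma sum_char_dotp:
  fixes chi :: "'r::{comm_ring_1,finite} \<Rightarrow> complex"
  assumes chi: "additive_char chi" and D: "additive_subgroup n D"
    and detects: "detects_dual chi n D" and t: "t \<in> vecs n"
  shows "(\<Sum>v\<in>D. chi (dotp n v t)) = (if t \<in> dual_code n D then of_nat (card D) else 0)"
proof (cases "t \<in> dual_code n D")
  case True
  then show ?thesis using chi by (simp add: dual_code_def additive_char_def)
next
  case False
  have len: "length v = n" if "v \<in> D" for v
    using that D by (auto simp: additive_subgroup_def vecs_def)
  obtain v0 where v0: "v0 \<in> D" "chi (dotp n v0 t) \<noteq> 1"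
    using detects t False by (auto simp: detects_dual_def)
  txt \<open>Translation by \<open>v0\<close> permutes \<open>D\<close> and multiplies the sum by \<open>\<chi>(v0\<cdot>t) \<noteq> 1\<close>.\<close>
  have "(\<Sum>v\<in>D. chi (dotp n v t)) = (\<Sum>v\<in>D. chi (dotp n (vadd v v0) t))"
  proof (rule sum.reindex_bij_witness[of _ "\<lambda>v. vadd v v0" "\<lambda>v. vadd v (map uminus v0)"])
    fix v assume v: "v \<in> D"
    show "vadd (vadd v v0) (map uminus v0) = v" "vadd (vadd v (map uminus v0)) v0 = v"
      using len[OF v] len[OF v0(1)] by (auto simp: vadd_def intro!: nth_equalityI)
    then show "chi (dotp n (vadd (vadd v (map uminus v0)) v0) t) = chi (dotp n v t)"
      by simp
    show "vadd v v0 \<in> D" "vadd v (map uminus v0) \<in> D"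
      using v v0 D by (auto simp: additive_subgroup_def)
  qed
  also have "\<dots> = chi (dotp n v0 t) * (\<Sum>v\<in>D. chi (dotp n v t))"
    unfolding sum_distrib_left
    by (rule sum.cong) (use chi len v0 in \<open>auto simp: dotp_vadd additive_char_def\<close>)
  finally have "(1 - chi (dotp n v0 t)) * (\<Sum>v\<in>D. chi (dotp n v t)) = 0"
    by (simp add: algebra_simps)
  then show ?thesis using v0 False by simp
qed

theorem jac_dual_code:
  fixes chi :: "'r::{comm_ring_1,finite} \<Rightarrow> complex"
  assumes chi: "additive_char chi" and D: "additive_subgroup n D"
    and detects: "detects_dual chi n D"
  shows "jac n C (dual_code n D) w x =
         (1 / of_nat (card D)) *
           jac n C D w (\<lambda>(a1, a2, a3). \<Sum>b\<in>UNIV. chi (a2 * b) * x (a1, b, a3))"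
proof -
  have "finite D" using D finite_vecs finite_subset by (auto simp: additive_subgroup_def)
  then have card_D: "card D \<noteq> 0" using D by (auto simp: additive_subgroup_def)
  have dual_vecs: "dual_code n D \<subseteq> vecs n" by (auto simp: dual_code_def)
  have inner: "(\<Sum>v\<in>D. \<Prod>a\<in>UNIV.
                  (\<lambda>(a1, a2, a3). \<Sum>b\<in>UNIV. chi (a2 * b) * x (a1, b, a3)) a ^ hcount n u v w a)
     = of_nat (card D) * (\<Sum>t\<in>dual_code n D. \<Prod>a\<in>UNIV. x a ^ hcount n u t w a)" for u
  proof -
    define X where "X t = (\<Prod>i<n. x (u!i, t!i, w!i))" for t
    have "(\<Sum>v\<in>D. \<Prod>a\<in>UNIV.
             (\<lambda>(a1, a2, a3). \<Sum>b\<in>UNIV. chi (a2 * b) * x (a1, b, a3)) a ^ hcount n u v w a)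
       = (\<Sum>v\<in>D. \<Prod>i<n. \<Sum>b\<in>UNIV. chi (v!i * b) * x (u!i, b, w!i))"
      by (simp add: prod_pow_hcount)
    also have "\<dots> = (\<Sum>v\<in>D. \<Sum>t\<in>vecs n. \<Prod>i<n. chi (v!i * t!i) * x (u!i, t!i, w!i))"
      by (simp only: prod_sum_eq_sum_vecs)
    also have "\<dots> = (\<Sum>v\<in>D. \<Sum>t\<in>vecs n. chi (dotp n v t) * X t)"
      by (simp add: prod.distrib X_def dotp_def additive_char_sum[OF chi])
    also have "\<dots> = (\<Sum>t\<in>vecs n. X t * (\<Sum>v\<in>D. chi (dotp n v t)))"
      by (subst sum.swap) (simp add: sum_distrib_left mult.commute)
    also have "\<dots> = (\<Sum>t\<in>vecs n. X t * (if t \<in> dual_code n D then of_nat (card D) else 0))"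
      by (rule sum.cong[OF refl]) (simp add: sum_char_dotp[OF chi D detects])
    also have "\<dots> = of_nat (card D) * (\<Sum>t\<in>vecs n \<inter> dual_code n D. X t)"
      by (simp add: sum.inter_restrict[OF finite_vecs] sum_distrib_left if_distrib mult.commute
          cong: if_cong)
    also have "\<dots> = of_nat (card D) * (\<Sum>t\<in>dual_code n D. \<Prod>a\<in>UNIV. x a ^ hcount n u t w a)"
      using dual_vecs by (simp add: Int_absorb1 prod_pow_hcount X_def)
    finally show ?thesis .
  qed
  show ?thesis unfolding jac_def by (simp add: inner sum_distrib_left card_D)
qed

section \<open>The character of \<open>Z\<^sub>k\<close>\<close>

lemma power_mod_root_of_unity:
  fixes zeta :: complex
  assumes "zeta ^ k = 1"
  shows "zeta ^ (m mod k) = zeta ^ m"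
proof -
  have "zeta ^ m = zeta ^ (k * (m div k) + m mod k)" by simp
  also have "\<dots> = (zeta ^ k) ^ (m div k) * zeta ^ (m mod k)" by (simp only: power_add power_mult)
  finally show ?thesis using assms by simp
qed

lemma Zk_character_props:
  assumes "Zk_character chi"
  shows Zk_character_additive: "additive_char chi"
    and Zk_character_kernel: "c \<noteq> 0 \<Longrightarrow> chi c \<noteq> 1"
proof -
  obtain k phi zeta where bij: "bij_betw phi UNIV {0..<k}"
    and phi_add: "\<forall>x y. phi (x + y) = (phi x + phi y) mod k"
    and root: "zeta ^ k = 1" and primitive: "\<forall>j. 0 < j \<and> j < k \<longrightarrow> zeta ^ j \<noteq> 1"
    and chi: "\<forall>x. chi x = zeta ^ phi x"
    using assms unfolding Zk_character_def by blast
  have less: "phi y < k" for y using bij by (auto simp: bij_betw_def)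
  have "phi 0 = (phi 0 + phi 0) mod k" using phi_add[rule_format, of 0 0] by simp
  then have phi_0: "phi 0 = 0"
    using less[of 0] by (cases "phi 0 + phi 0 < k") (auto simp: le_mod_geq)
  show "additive_char chi"
    unfolding additive_char_def
    using chi phi_0 phi_add power_mod_root_of_unity[OF root] by (simp add: power_add)
  show "chi c \<noteq> 1" if "c \<noteq> 0"
  proof -
    have "phi c \<noteq> phi 0" using bij that by (auto simp: bij_betw_def inj_on_def)
    then show ?thesis using phi_0 chi primitive less[of c] by auto
  qed
qed

lemma Zk_character_detects_dual:
  assumes "Zk_character chi"
  shows "detects_dual chi n D"
  using Zk_character_kernel[OF assms] by (auto simp: detects_dual_def dual_code_def)

section \<open>The character of \<open>F\<^sub>q\<close>\<close>

lemma of_nat_mod_char: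
  assumes "of_nat p = (0::'r::comm_ring_1)"
  shows "(of_nat (m mod p) :: 'r) = of_nat m"
proof -
  have "(of_nat m :: 'r) = of_nat (p * (m div p) + m mod p)" by simp
  also have "\<dots> = of_nat p * of_nat (m div p) + of_nat (m mod p)"
    by (simp only: of_nat_add of_nat_mult)
  finally show ?thesis using assms by simp
qed

lemma Ints_ex_of_nat_less_char:
  assumes "of_nat p = (0::'r::comm_ring_1)" and "p > 0" and "r \<in> \<int>"
  shows "\<exists>j<p. r = (of_nat j :: 'r)"
proof -
  obtain z where z: "r = of_int z" using assms(3) by (auto elim: Ints_cases)
  have "(of_int z :: 'r) = of_int (int p * (z div int p) + z mod int p)" by simp
  also have "\<dots> = of_int (int p) * of_int (z div int p) + of_int (z mod int p)"
    by (simp only: of_int_add of_int_mult)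
  finally have "r = of_nat (nat (z mod int p))" using z assms(1,2) by simp
  moreover have "nat (z mod int p) < p" using assms(2) by (simp add: nat_less_iff)
  ultimately show ?thesis by blast
qed

lemma of_int_invertible_mod_prime:
  assumes "prime p" and "of_nat p = (0::'r::comm_ring_1)" and "\<not> int p dvd d"
  obtains e where "of_int e * of_int d = (1::'r)"
proof -
  have "coprime (int p) d" using assms(1,3) by (intro prime_imp_coprime) auto
  then obtain e e' where "e * d + e' * int p = 1"
    using bezout_int[of d "int p"] by (auto simp: coprime_iff_gcd_eq_1 gcd.commute)
  then have "(of_int (e * d + e' * int p) :: 'r) = 1" by simp
  then show ?thesis using assms(2) that by simp
qed

text \<open>In characteristic \<open>p\<close> this \<open>\<int>\<close>-span is the \<open>F\<^sub>p\<close>-span of \<open>\<lambda>\<^sup>0, \<dots>, \<lambda>\<^sup>m\<^sup>-\<^sup>1\<close>.\<close>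

definition power_span :: "'r::comm_ring_1 \<Rightarrow> nat \<Rightarrow> 'r set" where
  "power_span lam m = {y. \<exists>c. (\<forall>i. c i \<in> \<int>) \<and> y = (\<Sum>i<m. c i * lam ^ i)}"

lemma power_spanI: "(\<forall>i. c i \<in> \<int>) \<Longrightarrow> y = (\<Sum>i<m. c i * lam ^ i) \<Longrightarrow> y \<in> power_span lam m"
  unfolding power_span_def by blast

lemma power_span_zero: "0 \<in> power_span lam m"
  by (rule power_spanI[of "\<lambda>_. 0"]) auto

lemma power_span_one: "m \<ge> 1 \<Longrightarrow> 1 \<in> power_span lam m"
  by (rule power_spanI[of "\<lambda>i. of_bool (i = 0)"]) (auto simp: sum_of_bool_mult_eq)

lemma power_span_add:
  assumes "a \<in> power_span lam m" "b \<in> power_span lam m"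
  shows "a + b \<in> power_span lam m"
proof -
  obtain c d where "\<forall>i. c i \<in> \<int>" "a = (\<Sum>i<m. c i * lam ^ i)"
    and "\<forall>i. d i \<in> \<int>" "b = (\<Sum>i<m. d i * lam ^ i)"
    using assms by (auto simp: power_span_def)
  then show ?thesis
    by (intro power_spanI[of "\<lambda>i. c i + d i"]) (auto simp: sum.distrib algebra_simps)
qed

lemma power_span_scale:
  assumes "r \<in> \<int>" "a \<in> power_span lam m"
  shows "r * a \<in> power_span lam m"
proof -
  obtain c where "\<forall>i. c i \<in> \<int>" "a = (\<Sum>i<m. c i * lam ^ i)"
    using assms(2) by (auto simp: power_span_def)
  then show ?thesis
    using assms(1) by (intro power_spanI[of "\<lambda>i. r * c i"]) (auto simp: sum_distrib_left mult.assoc)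
qed

lemma power_span_diff:
  "a \<in> power_span lam m \<Longrightarrow> b \<in> power_span lam m \<Longrightarrow> a - b \<in> power_span lam m"
  using power_span_add[of a lam m "(-1) * b"] power_span_scale[of "-1" b lam m] by simp

lemma power_span_Suc:
  "power_span lam (Suc m) = {v + r * lam ^ m | v r. v \<in> power_span lam m \<and> r \<in> \<int>}"
proof (intro set_eqI iffI)
  fix y assume "y \<in> power_span lam (Suc m)"
  then obtain c where c: "\<forall>i. c i \<in> \<int>" "y = (\<Sum>i<Suc m. c i * lam ^ i)"
    by (auto simp: power_span_def)
  have "(\<Sum>i<m. c i * lam ^ i) \<in> power_span lam m" using c by (intro power_spanI) auto
  then show "y \<in> {v + r * lam ^ m | v r. v \<in> power_span lam m \<and> r \<in> \<int>}" using c by auto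
next
  fix y assume "y \<in> {v + r * lam ^ m | v r. v \<in> power_span lam m \<and> r \<in> \<int>}"
  then obtain r c where "r \<in> \<int>" "\<forall>i. c i \<in> \<int>" "y = (\<Sum>i<m. c i * lam ^ i) + r * lam ^ m"
    by (auto simp: power_span_def)
  then show "y \<in> power_span lam (Suc m)"
    by (intro power_spanI[of "c(m := r)"]) (auto intro!: sum.cong)
qed

lemma power_span_mult_lam:
  assumes "a \<in> power_span lam m"
  shows "lam * a \<in> power_span lam (Suc m)"
proof -
  obtain c where c: "\<forall>i. c i \<in> \<int>" "a = (\<Sum>i<m. c i * lam ^ i)"
    using assms by (auto simp: power_span_def)
  define c' where "c' i = (case i of 0 \<Rightarrow> 0 | Suc j \<Rightarrow> c j)" for i
  have "(\<Sum>i<Suc m. c' i * lam ^ i) = (\<Sum>i<m. c i * lam ^ Suc i)"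
    by (simp only: sum.lessThan_Suc_shift) (simp add: c'_def)
  also have "\<dots> = lam * a" using c by (simp add: sum_distrib_left algebra_simps)
  finally show ?thesis
    using c by (intro power_spanI[of c']) (auto simp: c'_def split: nat.split)
qed

lemma power_span_UNIV_if_stable:
  fixes lam :: "'r::{comm_ring_1,finite}"
  assumes prim: "primitive_element lam" and stable: "lam ^ m \<in> power_span lam m"
  shows "power_span lam m = UNIV"
proof -
  have one: "1 \<in> power_span lam m"
    using stable power_span_one[of m lam] by (cases "m = 0") auto
  have mult_lam: "lam * a \<in> power_span lam m" if a: "a \<in> power_span lam m" for a
  proof -
    obtain v r where "lam * a = v + r * lam ^ m" "v \<in> power_span lam m" "r \<in> \<int>"
      using power_span_mult_lam[OF a] unfolding power_span_Suc by blast
    then show ?thesis using power_span_add power_span_scale stable by metis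
  qed
  have "lam ^ j \<in> power_span lam m" for j
    by (induction j) (use one mult_lam in auto)
  then have "y \<in> power_span lam m" for y
    using prim power_span_zero by (cases "y = 0") (auto simp: primitive_element_def)
  then show ?thesis by blast
qed

lemma card_power_span_Suc:
  fixes lam :: "'r::{comm_ring_1,finite}"
  assumes p: "prime p" "of_nat p = (0::'r)" and new: "lam ^ m \<notin> power_span lam m"
  shows "card (power_span lam (Suc m)) = p * card (power_span lam m)"
proof -
  let ?g = "\<lambda>(v, j). v + of_nat j * lam ^ m"
  have image: "power_span lam (Suc m) = ?g ` (power_span lam m \<times> {..<p})"
  proof (intro set_eqI iffI)
    fix y assume "y \<in> power_span lam (Suc m)"
    then obtain v r where y: "y = v + r * lam ^ m" "v \<in> power_span lam m" "r \<in> \<int>"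
      unfolding power_span_Suc by blast
    obtain j where "j < p" "r = of_nat j"
      using Ints_ex_of_nat_less_char[OF p(2) prime_gt_0_nat[OF p(1)] y(3)] by blast
    then show "y \<in> ?g ` (power_span lam m \<times> {..<p})"
      using y by (auto intro!: image_eqI[of _ _ "(v, j)"])
  qed (auto simp: power_span_Suc intro: Ints_of_nat)
  have "inj_on ?g (power_span lam m \<times> {..<p})"
  proof (rule inj_onI, clarify)
    fix v j v' j' assume v: "v \<in> power_span lam m" "j < p" "v' \<in> power_span lam m" "j' < p"
      and eq: "v + of_nat j * lam ^ m = v' + of_nat j' * lam ^ m"
    show "v = v' \<and> j = j'"
    proof (cases "j = j'")
      case True then show ?thesis using eq by simp
    next
      case False
      txt \<open>Otherwise \<open>j - j'\<close> is a unit of the prime field and \<open>\<lambda>\<^sup>m\<close> would lie in the span.\<close>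
      define d where "d = int j - int j'"
      have "\<not> int p dvd d"
        using dvd_imp_le_int[of d "int p"] False v(2,4) by (auto simp: d_def)
      then obtain e where e: "of_int e * of_int d = (1::'r)"
        using of_int_invertible_mod_prime[OF p] by blast
      have "of_int d * lam ^ m = v' - v" using eq by (simp add: d_def algebra_simps)
      then have "lam ^ m = of_int e * (v' - v)" by (metis e mult.assoc mult_1)
      moreover have "of_int e * (v' - v) \<in> power_span lam m"
        using v by (intro power_span_scale power_span_diff) auto
      ultimately show ?thesis using new by simp
    qed
  qed
  then have "card (power_span lam (Suc m)) = card (power_span lam m \<times> {..<p})"
    unfolding image by (rule card_image)
  then show ?thesis by (simp add: card_cartesian_product)
qed

lemma power_span_eq_UNIV:
  fixes lam :: "'r::{comm_ring_1,finite}"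
  assumes p: "prime p" "of_nat p = (0::'r)" and prim: "primitive_element lam"
    and card: "card (UNIV :: 'r set) = p ^ f"
  shows "power_span lam f = UNIV"
proof -
  have "power_span lam m = UNIV \<or> card (power_span lam m) = p ^ m" for m
  proof (induction m)
    case 0
    have "power_span lam 0 = {0}" using power_span_zero by (auto simp: power_span_def)
    then show ?case by simp
  next
    case (Suc m)
    show ?case
    proof (cases "lam ^ m \<in> power_span lam m")
      case True
      then have "power_span lam m = UNIV" using power_span_UNIV_if_stable[OF prim] by blast
      moreover have "power_span lam m \<subseteq> power_span lam (Suc m)"
        unfolding power_span_Suc by (force intro: exI[of _ 0])
      ultimately show ?thesis by auto
    next
      case False
      then show ?thesis using Suc card_power_span_Suc[OF p False] by auto
    qed
  qed
  then show ?thesis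
    using card card_subset_eq[OF finite_UNIV subset_UNIV, of "power_span lam f"] by auto
qed

lemma ex_prime_digits:
  fixes lam :: "'r::{comm_ring_1,finite}"
  assumes p: "prime p" "of_nat p = (0::'r)" and prim: "primitive_element lam"
    and card: "card (UNIV :: 'r set) = p ^ f"
  obtains a where "\<forall>i<f. a i < p" "y = (\<Sum>i<f. of_nat (a i) * lam ^ i)"
proof -
  obtain c where c: "\<forall>i. c i \<in> \<int>" "y = (\<Sum>i<f. c i * lam ^ i)"
    using power_span_eq_UNIV[OF assms] by (auto simp: power_span_def)
  define a where "a i = (SOME j. j < p \<and> c i = of_nat j)" for i
  have "a i < p \<and> c i = of_nat (a i)" for i
    unfolding a_def
    by (rule someI_ex) (use Ints_ex_of_nat_less_char[OF p(2) prime_gt_0_nat[OF p(1)]] c in blast)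
  then show ?thesis using c by (intro that[of a]) auto
qed

lemma Fq_character_additive:
  assumes "Fq_character chi"
  shows "additive_char chi"
proof -
  obtain p f lam zeta where p: "prime p" "of_nat p = (0::'a)"
    and card: "card (UNIV::'a set) = p ^ f" and prim: "primitive_element lam"
    and root: "zeta ^ p = 1"
    and chi: "\<forall>a::nat \<Rightarrow> nat. (\<forall>i<f. a i < p) \<longrightarrow>
                chi (\<Sum>i<f. of_nat (a i) * lam ^ i) = zeta ^ (a 0)"
    using assms unfolding Fq_character_def by blast
  have p_pos: "p > 0" using prime_gt_0_nat[OF p(1)] .
  have "chi 0 = 1" using chi[rule_format, of "\<lambda>_. 0"] p_pos by simp
  moreover have "chi (a + b) = chi a * chi b" for a b
  proof -
    obtain u where u: "\<forall>i<f. u i < p" "a = (\<Sum>i<f. of_nat (u i) * lam ^ i)"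
      using ex_prime_digits[OF p prim card] by blast
    obtain v where v: "\<forall>i<f. v i < p" "b = (\<Sum>i<f. of_nat (v i) * lam ^ i)"
      using ex_prime_digits[OF p prim card] by blast
    have "a + b = (\<Sum>i<f. of_nat ((u i + v i) mod p) * lam ^ i)"
      using u v by (simp add: of_nat_mod_char[OF p(2)] sum.distrib algebra_simps)
    then have "chi (a + b) = zeta ^ ((u 0 + v 0) mod p)" using chi p_pos by simp
    also have "\<dots> = zeta ^ u 0 * zeta ^ v 0"
      using power_mod_root_of_unity[OF root] by (simp add: power_add)
    finally show ?thesis using chi u v by simp
  qed
  ultimately show ?thesis by (simp add: additive_char_def)
qed

lemma Fq_character_one:
  assumes "Fq_character chi"
  shows "chi 1 \<noteq> 1"
proof -
  obtain p f lam zeta where "prime p" "f \<ge> 1"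
    and primitive: "\<forall>j. 0 < j \<and> j < p \<longrightarrow> zeta ^ j \<noteq> 1"
    and chi: "\<forall>a::nat \<Rightarrow> nat. (\<forall>i<f. a i < p) \<longrightarrow>
                chi (\<Sum>i<f. of_nat (a i) * lam ^ i) = zeta ^ (a 0)"
    using assms unfolding Fq_character_def by blast
  moreover have "(\<Sum>i<f. of_nat (of_bool (i = 0)) * lam ^ i) = (1::'a)"
    using \<open>f \<ge> 1\<close> by (simp add: sum_of_bool_mult_eq)
  ultimately have "chi 1 = zeta" and "zeta \<noteq> 1"
    using chi[rule_format, of "\<lambda>i. of_bool (i = 0)"] primitive[rule_format, of 1]
    by (auto dest: prime_gt_1_nat)
  then show ?thesis by simp
qed

lemma linear_subspace_imp_additive_subgroup:
  assumes "linear_subspace n C"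
  shows "additive_subgroup n C"
proof -
  have "map ((*) (-1)) u \<in> C" if "u \<in> C" for u
    using assms that unfolding linear_subspace_def by blast
  moreover have "map ((*) (-1)) u = map uminus u" for u :: "'a list" by simp
  ultimately show ?thesis using assms by (auto simp: linear_subspace_def additive_subgroup_def)
qed

text \<open>A nonzero inner product can be scaled to \<open>1\<close> inside \<open>D\<close>, and \<open>\<chi>(1) \<noteq> 1\<close>.\<close>

lemma Fq_character_detects_dual:
  assumes chi: "Fq_character chi" and D: "linear_subspace n D"
  shows "detects_dual chi n D"
  unfolding detects_dual_def
proof (intro ballI impI)
  fix t assume "t \<notin> dual_code n D" "t \<in> vecs n"
  then obtain u where u: "u \<in> D" "dotp n u t \<noteq> 0" by (auto simp: dual_code_def)
  obtain c where c: "dotp n u t * c = 1"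
    using chi u(2) unfolding Fq_character_def by blast
  have "dotp n (map ((*) c) u) t = c * dotp n u t"
    using u D by (auto simp: dotp_def sum_distrib_left mult.assoc linear_subspace_def vecs_def)
  then have "chi (dotp n (map ((*) c) u) t) \<noteq> 1"
    using c Fq_character_one[OF chi] by (simp add: mult.commute)
  moreover have "map ((*) c) u \<in> D" using D u by (auto simp: linear_subspace_def)
  ultimately show "\<exists>v\<in>D. chi (dotp n v t) \<noteq> 1" by blast
qed

theorem theorem3p3:
  fixes chi :: "'r::{comm_ring_1,finite} \<Rightarrow> complex"
    and C D :: "'r list set" and w :: "'r list" and n :: nat
    and x :: "'r \<times> 'r \<times> 'r \<Rightarrow> complex"
  assumes setting:
    "(Fq_character chi \<and> linear_subspace n C \<and> linear_subspace n D) \<or>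
     (Zk_character chi \<and> additive_subgroup n C \<and> additive_subgroup n D)"
    and w: "length w = n"
  shows "jac n C (dual_code n D) w x =
         (1 / of_nat (card D)) *
           jac n C D w (\<lambda>(a1, a2, a3). \<Sum>b\<in>UNIV. chi (a2 * b) * x (a1, b, a3))"
  using setting
proof
  assume "Fq_character chi \<and> linear_subspace n C \<and> linear_subspace n D"
  then show ?thesis
    by (intro jac_dual_code Fq_character_additive linear_subspace_imp_additive_subgroup
        Fq_character_detects_dual) auto
next
  assume "Zk_character chi \<and> additive_subgroup n C \<and> additive_subgroup n D"
  then show ?thesis
    by (intro jac_dual_code Zk_character_additive Zk_character_detects_dual) auto
qed

end
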